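(* For $m\ge2$ let $q_m(i)=\frac{m}{2h_{m-1}}\frac{1}{i(m-i)}$ ($1\le i\le m-1$), $h_{m-1}=\sum_{j=1}^{m-1}1/j$. For $n\ge2$ let $L_n\sim q_n$ and $I_n=\max\{L_n,n-L_n\}$. Let $(X_n)$ satisfy $X_n\overset d= X_{I_n}+X'_{n-I_n}+b_n$ with $(X_j)$, $(X'_j)$ (where $X'_j\overset d=X_j$) and $(I_n,b_n)$ independent, and suppose there are constants $\mu,\sigma,\epsilon,C>0$ with $|\mathbb E X_n-\mu n|\le Cn^{1/2-\epsilon}$, $|\mathrm{Var}X_n-\sigma^2n|\le Cn^{1-\epsilon}$, $\mathbb E|b_n|^3\le n^{3/2-\epsilon}$. Set $Z_n=\frac{X_n-\mathbb E X_n}{\sigma\sqrt n}$, $\tau_n=\sqrt{\mathrm{Var}[Z_n]}$, $\mu_n=\mathbb E X_n$, $b^{(n)}=\frac{1}{\sigma\sqrt n}(b_n+\mu_{I_n}+\mu_{n-I_n}-\mu_n)$, and with $N_1,N_2$ standard Gaussians independent of everything, \[Z_n^*=\sqrt{\tfrac{I_n}{n}}\tau_{I_n}N_1+\sqrt{\tfrac{n-I_n}{n}}\tau_{n-I_n}N_2+b^{(n)}.\] Let $d_n=\zeta_3(Z_n,\tau_nN_1)$. Then \[d_n\le\mathbb E\left[\left(\frac{n-I_n}{n}\right)^{3/2}d_{n-I_n}+\left(\frac{I_n}{n}\right)^{3/2}d_{I_n}\right]+\zeta_3(Z_n^*,\tau_nN_1).\]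
   Context: $\zeta_3$ is the Zolotarev metric: $\zeta_3(X,Y)=\sup_{f\in\mathcal F_3}|\mathbb E[f(X)-f(Y)]|$, where $\mathcal F_3=\{f\in C^2(\mathbb R,\mathbb R):|f''(x)-f''(y)|\le|x-y|\ \forall x,y\}$ (it depends only on the laws of $X$ and $Y$). *)

theory Defs
  imports "HOL-Probability.Probability"
begin

definition F3 :: "(real \<Rightarrow> real) set" where
  "F3 = {f. \<exists>f1 f2. (\<forall>x. (f has_real_derivative f1 x) (at x)) \<and>
                    (\<forall>x. (f1 has_real_derivative f2 x) (at x)) \<and>
                    (\<forall>x y. \<bar>f2 x - f2 y\<bar> \<le> \<bar>x - y\<bar>)}"

definition zeta3 :: "real measure \<Rightarrow> real measure \<Rightarrow> ennreal" where
  "zeta3 \<mu> \<nu> = (SUP f\<in>F3. ennreal \<bar>(\<integral>x. f x \<partial>\<mu>) - (\<integral>x. f x \<partial>\<nu>)\<bar>)"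

definition q :: "nat \<Rightarrow> nat \<Rightarrow> real" where
  "q m i = real m / (2 * harm (m - 1)) * (1 / (real i * (real m - real i)))"

definition mean :: "'a measure \<Rightarrow> ('a \<Rightarrow> real) \<Rightarrow> real" where
  "mean M Y = (\<integral>\<omega>. Y \<omega> \<partial>M)"

definition var :: "'a measure \<Rightarrow> ('a \<Rightarrow> real) \<Rightarrow> real" where
  "var M Y = (\<integral>\<omega>. (Y \<omega> - mean M Y)\<^sup>2 \<partial>M)"

definition gen_sets :: "'a measure \<Rightarrow> ('a \<Rightarrow> 'b) \<Rightarrow> 'b measure \<Rightarrow> 'a set set" where
  "gen_sets M Y N = {Y -` A \<inter> space M | A. A \<in> sets N}"

datatype comp = CX | CX' | CIb | CN1 | CN2

end

(*
  By the recursion, Z_n has the law of sqrt(I/n) Z_I + sqrt((n-I)/n) Z'_(n-I) + b^(n).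
  Replacing first Z_I by tau_I N1 and then Z'_(n-I) by tau_(n-I) N2 turns this into Z_n^*.
  Each replacement is estimated by conditioning on the remaining independent components: for
  fixed values of these only an affine image of one variable changes, and zeta_3 is ideal of
  order 3, zeta_3(aX + c, aY + c) <= a^3 zeta_3(X, Y). So the two replacements cost at most
  E[(I/n)^(3/2) d_I] and E[((n-I)/n)^(3/2) d_(n-I)], and the triangle inequality for zeta_3
  collects the three terms.
*)
theory Submission
  imports Defs
begin

lemma F3_continuous: "f \<in> F3 \<Longrightarrow> continuous_on UNIV f"
proof -
  assume "f \<in> F3"
  then obtain f1 where "\<And>x. (f has_real_derivative f1 x) (at x)" unfolding F3_def by blast
  then show ?thesis by (blast intro: continuous_at_imp_continuous_on DERIV_isCont)
qed

lemma F3_borel_measurable: "f \<in> F3 \<Longrightarrow> f \<in> borel_measurable borel"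
  by (rule borel_measurable_continuous_onI[OF F3_continuous])

lemma abs_diff_le_of_deriv_bound:
  fixes g g' :: "real \<Rightarrow> real"
  assumes "\<And>t. (g has_real_derivative g' t) (at t)" and "\<And>t. \<bar>t\<bar> \<le> r \<Longrightarrow> \<bar>g' t\<bar> \<le> K"
    and "\<bar>x\<bar> \<le> r"
  shows "\<bar>g x - g 0\<bar> \<le> K * r"
proof -
  have "norm (g x - g 0) \<le> K * norm (x - 0)"
    by (rule field_differentiable_bound[of "cball 0 r"])
      (use assms in \<open>auto intro: has_field_derivative_at_within\<close>)
  also have "\<dots> \<le> K * r"
  proof (rule mult_left_mono)
    show "0 \<le> K" using assms(2)[of 0] assms(3) by force
  qed (use assms(3) in simp)
  finally show ?thesis by simp
qed

lemma F3_cubic_growth: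
  assumes "f \<in> F3"
  obtains K where "\<And>x. \<bar>f x\<bar> \<le> K * (1 + \<bar>x\<bar>) ^ 3"
proof -
  from assms obtain f1 f2 where d1: "\<And>x. (f has_real_derivative f1 x) (at x)"
    and d2: "\<And>x. (f1 has_real_derivative f2 x) (at x)"
    and lip: "\<And>x y. \<bar>f2 x - f2 y\<bar> \<le> \<bar>x - y\<bar>" unfolding F3_def by blast
  define K where "K = \<bar>f 0\<bar> + \<bar>f1 0\<bar> + \<bar>f2 0\<bar> + 1"
  have "\<bar>f x\<bar> \<le> K * (1 + \<bar>x\<bar>) ^ 3" for x
  proof -
    define r where "r = \<bar>x\<bar>"
    have "\<bar>f2 t\<bar> \<le> \<bar>f2 0\<bar> + r" if "\<bar>t\<bar> \<le> r" for t
      using lip[of t 0] that by linarith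
    then have "\<bar>f1 t - f1 0\<bar> \<le> (\<bar>f2 0\<bar> + r) * r" if "\<bar>t\<bar> \<le> r" for t
      using that by (intro abs_diff_le_of_deriv_bound[OF d2])
    then have "\<bar>f1 t\<bar> \<le> \<bar>f1 0\<bar> + (\<bar>f2 0\<bar> + r) * r" if "\<bar>t\<bar> \<le> r" for t
      using that by fastforce
    then have "\<bar>f x - f 0\<bar> \<le> (\<bar>f1 0\<bar> + (\<bar>f2 0\<bar> + r) * r) * r"
      by (intro abs_diff_le_of_deriv_bound[OF d1]) (auto simp: r_def)
    then have "\<bar>f x\<bar> \<le> \<bar>f 0\<bar> + \<bar>f1 0\<bar> * r + \<bar>f2 0\<bar> * r\<^sup>2 + r ^ 3"
      by (simp add: algebra_simps power2_eq_square power3_eq_cube)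
    also have "\<dots> \<le> \<bar>f 0\<bar> * (1 + r) ^ 3 + \<bar>f1 0\<bar> * (1 + r) ^ 3 + \<bar>f2 0\<bar> * (1 + r) ^ 3 + (1 + r) ^ 3"
    proof -
      have r: "0 \<le> r" by (simp add: r_def)
      have "r ^ k \<le> (1 + r) ^ k" for k
        using r by (intro power_mono) auto
      moreover have "(1 + r) ^ k \<le> (1 + r) ^ 3" if "k \<le> 3" for k
        using r that by (intro power_increasing) auto
      ultimately have "r ^ k \<le> (1 + r) ^ 3" if "k \<le> 3" for k
        using that order_trans by blast
      from this[of 0] this[of 1] this[of 2] this[of 3] show ?thesis
        by (intro add_mono mult_left_mono) (auto simp: mult_le_cancel_left1)
    qed
    also have "\<dots> = K * (1 + r) ^ 3" by (simp add: K_def algebra_simps)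
    finally show ?thesis by (simp add: r_def)
  qed
  then show ?thesis by (rule that)
qed

lemma F3_affine:
  assumes "f \<in> F3" "a > 0"
  shows "(\<lambda>x. f (a * x + c) / a ^ 3) \<in> F3"
proof -
  from assms obtain f1 f2 where d1: "\<And>x. (f has_real_derivative f1 x) (at x)"
    and d2: "\<And>x. (f1 has_real_derivative f2 x) (at x)"
    and lip: "\<And>x y. \<bar>f2 x - f2 y\<bar> \<le> \<bar>x - y\<bar>" unfolding F3_def by blast
  have lin: "((\<lambda>x. a * x + c) has_real_derivative a) (at x)" for x
    by (auto intro!: derivative_eq_intros)
  have "((\<lambda>x. f (a * x + c) / a ^ 3) has_real_derivative f1 (a * x + c) / a\<^sup>2) (at x)" for x
    using DERIV_cdivide[OF DERIV_chain2[OF d1 lin], of "a ^ 3"] assms(2)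
    by (simp add: power2_eq_square power3_eq_cube)
  moreover have "((\<lambda>x. f1 (a * x + c) / a\<^sup>2) has_real_derivative f2 (a * x + c) / a) (at x)" for x
    using DERIV_cdivide[OF DERIV_chain2[OF d2 lin], of "a\<^sup>2"] assms(2)
    by (simp add: power2_eq_square)
  moreover have "\<bar>f2 (a * x + c) / a - f2 (a * y + c) / a\<bar> \<le> \<bar>x - y\<bar>" for x y
  proof -
    have "\<bar>f2 (a * x + c) - f2 (a * y + c)\<bar> \<le> a * \<bar>x - y\<bar>"
    proof -
      have "a * x + c - (a * y + c) = a * (x - y)" by (simp add: algebra_simps)
      then show ?thesis using lip[of "a * x + c" "a * y + c"] assms(2) by (simp add: abs_mult)
    qed
    then show ?thesis
      using assms(2) by (simp add: diff_divide_distrib[symmetric] pos_divide_le_eq mult.commute)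
  qed
  ultimately show ?thesis
    unfolding F3_def mem_Collect_eq by (intro exI[of _ "\<lambda>x. f1 (a * x + c) / a\<^sup>2"] exI conjI allI)
qed

lemma integral_diff_le_zeta3:
  "f \<in> F3 \<Longrightarrow> ennreal \<bar>(\<integral>x. f x \<partial>\<mu>) - (\<integral>x. f x \<partial>\<nu>)\<bar> \<le> zeta3 \<mu> \<nu>"
  unfolding zeta3_def by (rule SUP_upper)

lemma zeta3_leI:
  "(\<And>f. f \<in> F3 \<Longrightarrow> ennreal \<bar>(\<integral>x. f x \<partial>\<mu>) - (\<integral>x. f x \<partial>\<nu>)\<bar> \<le> B) \<Longrightarrow> zeta3 \<mu> \<nu> \<le> B"
  unfolding zeta3_def by (rule SUP_least)

lemma zeta3_triangle: "zeta3 \<mu> \<rho> \<le> zeta3 \<mu> \<nu> + zeta3 \<nu> \<rho>"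
proof (rule zeta3_leI)
  fix f assume "f \<in> F3"
  have "ennreal \<bar>(\<integral>x. f x \<partial>\<mu>) - (\<integral>x. f x \<partial>\<rho>)\<bar>
      \<le> ennreal \<bar>(\<integral>x. f x \<partial>\<mu>) - (\<integral>x. f x \<partial>\<nu>)\<bar> + ennreal \<bar>(\<integral>x. f x \<partial>\<nu>) - (\<integral>x. f x \<partial>\<rho>)\<bar>"
    by (simp add: ennreal_plus[symmetric] del: ennreal_plus)
  also have "\<dots> \<le> zeta3 \<mu> \<nu> + zeta3 \<nu> \<rho>"
    using \<open>f \<in> F3\<close> by (intro add_mono integral_diff_le_zeta3)
  finally show "ennreal \<bar>(\<integral>x. f x \<partial>\<mu>) - (\<integral>x. f x \<partial>\<rho>)\<bar> \<le> zeta3 \<mu> \<nu> + zeta3 \<nu> \<rho>" .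
qed

lemma expectation_diff_le_zeta3:
  assumes "f \<in> F3" "Y \<in> borel_measurable M" "Y' \<in> borel_measurable N"
  shows "ennreal \<bar>(\<integral>\<omega>. f (Y \<omega>) \<partial>M) - (\<integral>\<omega>. f (Y' \<omega>) \<partial>N)\<bar> \<le> zeta3 (distr M borel Y) (distr N borel Y')"
  using integral_diff_le_zeta3[OF assms(1), of "distr M borel Y" "distr N borel Y'"] assms
  by (simp add: integral_distr F3_borel_measurable)

lemma zeta3_distr_leI:
  assumes "Y \<in> borel_measurable M" "Y' \<in> borel_measurable N"
    and "\<And>f. f \<in> F3 \<Longrightarrow> ennreal \<bar>(\<integral>\<omega>. f (Y \<omega>) \<partial>M) - (\<integral>\<omega>. f (Y' \<omega>) \<partial>N)\<bar> \<le> B"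
  shows "zeta3 (distr M borel Y) (distr N borel Y') \<le> B"
  using assms by (intro zeta3_leI) (simp add: integral_distr F3_borel_measurable)

lemma zeta3_affine_le:
  assumes "a \<ge> 0" and [measurable]: "Y \<in> borel_measurable M" "Y' \<in> borel_measurable M"
  shows "zeta3 (distr M borel (\<lambda>\<omega>. a * Y \<omega> + c)) (distr M borel (\<lambda>\<omega>. a * Y' \<omega> + c))
           \<le> ennreal (a ^ 3) * zeta3 (distr M borel Y) (distr M borel Y')"
proof (rule zeta3_distr_leI)
  fix f assume f: "f \<in> F3"
  show "ennreal \<bar>(\<integral>\<omega>. f (a * Y \<omega> + c) \<partial>M) - (\<integral>\<omega>. f (a * Y' \<omega> + c) \<partial>M)\<bar>
      \<le> ennreal (a ^ 3) * zeta3 (distr M borel Y) (distr M borel Y')"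
  proof (cases "a = 0")
    case False
    with assms(1) have "a > 0" by simp
    define h where "h x = f (a * x + c) / a ^ 3" for x
    have h: "h \<in> F3" unfolding h_def using F3_affine[OF f \<open>a > 0\<close>] .
    have "f (a * x + c) = a ^ 3 * h x" for x using \<open>a > 0\<close> by (simp add: h_def)
    then have "ennreal \<bar>(\<integral>\<omega>. f (a * Y \<omega> + c) \<partial>M) - (\<integral>\<omega>. f (a * Y' \<omega> + c) \<partial>M)\<bar>
        = ennreal (a ^ 3) * ennreal \<bar>(\<integral>\<omega>. h (Y \<omega>) \<partial>M) - (\<integral>\<omega>. h (Y' \<omega>) \<partial>M)\<bar>"
      using \<open>a > 0\<close> by (simp add: ennreal_mult[symmetric] abs_mult right_diff_distrib[symmetric])
    also have "\<dots> \<le> ennreal (a ^ 3) * zeta3 (distr M borel Y) (distr M borel Y')"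
      by (intro mult_left_mono expectation_diff_le_zeta3 h) auto
    finally show ?thesis .
  qed simp
qed auto

definition L3 :: "'a measure \<Rightarrow> ('a \<Rightarrow> real) \<Rightarrow> bool" where
  "L3 M Y \<longleftrightarrow> Y \<in> borel_measurable M \<and> integrable M (\<lambda>\<omega>. \<bar>Y \<omega>\<bar> ^ 3)"

lemma abs_add_cube_le: "\<bar>(a::real) + b\<bar> ^ 3 \<le> 4 * (\<bar>a\<bar> ^ 3 + \<bar>b\<bar> ^ 3)"
proof -
  define u v where "u = \<bar>a\<bar>" and "v = \<bar>b\<bar>"
  have "\<bar>a + b\<bar> ^ 3 \<le> (u + v) ^ 3"
    unfolding u_def v_def by (intro power_mono abs_triangle_ineq) auto
  also have "\<dots> = 4 * (u ^ 3 + v ^ 3) - 3 * (u + v) * (u - v)\<^sup>2"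
    by (simp add: algebra_simps power2_eq_square power3_eq_cube)
  also have "\<dots> \<le> 4 * (u ^ 3 + v ^ 3)"
    by (simp add: u_def v_def)
  finally show ?thesis unfolding u_def v_def .
qed

context prob_space
begin

lemma L3_const: "L3 M (\<lambda>_. c)"
  unfolding L3_def by auto

lemma L3_bound:
  assumes "Y \<in> borel_measurable M" "L3 M Y'" "AE \<omega> in M. \<bar>Y \<omega>\<bar> \<le> \<bar>Y' \<omega>\<bar>"
  shows "L3 M Y"
proof -
  have "AE \<omega> in M. norm (\<bar>Y \<omega>\<bar> ^ 3) \<le> norm (\<bar>Y' \<omega>\<bar> ^ 3)"
    using assms(3) by eventually_elim (simp add: power_mono)
  then show ?thesis
    using assms(1,2) unfolding L3_def
    by (auto intro: Bochner_Integration.integrable_bound[where f="\<lambda>\<omega>. \<bar>Y' \<omega>\<bar> ^ 3"])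
qed

lemma L3_add:
  assumes "L3 M Y" "L3 M Y'"
  shows "L3 M (\<lambda>\<omega>. Y \<omega> + Y' \<omega>)"
proof -
  have Y: "Y \<in> borel_measurable M" "Y' \<in> borel_measurable M"
    and int: "integrable M (\<lambda>\<omega>. 4 * (\<bar>Y \<omega>\<bar> ^ 3 + \<bar>Y' \<omega>\<bar> ^ 3))"
    using assms unfolding L3_def by auto
  have "AE \<omega> in M. norm (\<bar>Y \<omega> + Y' \<omega>\<bar> ^ 3) \<le> norm (4 * (\<bar>Y \<omega>\<bar> ^ 3 + \<bar>Y' \<omega>\<bar> ^ 3))"
    using abs_add_cube_le by (intro AE_I2) simp
  from Bochner_Integration.integrable_bound[OF int _ this] Y show ?thesis
    unfolding L3_def by simp
qed

lemma L3_cmult: "L3 M Y \<Longrightarrow> L3 M (\<lambda>\<omega>. c * Y \<omega>)"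
  unfolding L3_def by (auto simp: abs_mult power_mult_distrib)

lemma L3_divide: "L3 M Y \<Longrightarrow> L3 M (\<lambda>\<omega>. Y \<omega> / c)"
  using L3_cmult[of Y "1 / c"] by simp

lemma L3_diff: "L3 M Y \<Longrightarrow> L3 M Y' \<Longrightarrow> L3 M (\<lambda>\<omega>. Y \<omega> - Y' \<omega>)"
  using L3_add[of Y "\<lambda>\<omega>. (- 1) * Y' \<omega>"] L3_cmult[of Y' "- 1"] by simp

lemma L3_abs: "L3 M Y \<Longrightarrow> L3 M (\<lambda>\<omega>. \<bar>Y \<omega>\<bar>)"
  unfolding L3_def by auto

lemma L3_sum: "(\<And>i. i \<in> K \<Longrightarrow> L3 M (Y i)) \<Longrightarrow> L3 M (\<lambda>\<omega>. \<Sum>i\<in>K. Y i \<omega>)"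
  by (induction K rule: infinite_finite_induct) (auto intro: L3_add L3_const)

lemma L3_random_index:
  fixes J :: "'a \<Rightarrow> nat"
  assumes J: "J \<in> measurable M (count_space UNIV)" and "finite K" "AE \<omega> in M. J \<omega> \<in> K"
    and Y: "\<And>i. Y i \<in> borel_measurable M" "\<And>i. i \<in> K \<Longrightarrow> L3 M (Y i)"
  shows "L3 M (\<lambda>\<omega>. Y (J \<omega>) \<omega>)"
proof (rule L3_bound)
  show "(\<lambda>\<omega>. Y (J \<omega>) \<omega>) \<in> borel_measurable M"
    by (rule measurable_compose_countable'[OF _ J]) (simp_all add: Y(1))
  show "L3 M (\<lambda>\<omega>. \<Sum>i\<in>K. \<bar>Y i \<omega>\<bar>)"
    by (intro L3_sum L3_abs Y(2))
  show "AE \<omega> in M. \<bar>Y (J \<omega>) \<omega>\<bar> \<le> \<bar>\<Sum>i\<in>K. \<bar>Y i \<omega>\<bar>\<bar>"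
    using assms(3)
  proof eventually_elim
    fix \<omega> assume "J \<omega> \<in> K"
    then have "\<bar>Y (J \<omega>) \<omega>\<bar> \<le> (\<Sum>i\<in>K. \<bar>Y i \<omega>\<bar>)"
      by (rule member_le_sum[of _ _ "\<lambda>i. \<bar>Y i \<omega>\<bar>"]) (simp_all add: \<open>finite K\<close>)
    then show "\<bar>Y (J \<omega>) \<omega>\<bar> \<le> \<bar>\<Sum>i\<in>K. \<bar>Y i \<omega>\<bar>\<bar>" by simp
  qed
qed

lemma L3_distr_eq:
  assumes "distr M borel Y' = distr M borel Y" "Y' \<in> borel_measurable M" "L3 M Y"
  shows "L3 M Y'"
  using assms integrable_distr_eq[of Y M borel "\<lambda>x. \<bar>x\<bar> ^ 3"]
    integrable_distr_eq[of Y' M borel "\<lambda>x. \<bar>x\<bar> ^ 3"]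
  unfolding L3_def by auto

lemma L3_std_normal: "distributed M lborel N std_normal_density \<Longrightarrow> L3 M N"
  using distributed_integrable[of M lborel N std_normal_density "\<lambda>x. \<bar>x\<bar> ^ 3"]
    integrable_std_normal_moment_abs[of 3] distributed_measurable[of M lborel N]
  unfolding L3_def by auto

lemma integrable_F3_L3:
  assumes "L3 M Y" "f \<in> F3"
  shows "integrable M (\<lambda>\<omega>. f (Y \<omega>))"
proof -
  obtain K where K: "\<And>x. \<bar>f x\<bar> \<le> K * (1 + \<bar>x\<bar>) ^ 3" using F3_cubic_growth[OF assms(2)] by blast
  have "L3 M (\<lambda>\<omega>. 1 + \<bar>Y \<omega>\<bar>)" by (intro L3_add L3_const L3_abs assms(1))
  then have "integrable M (\<lambda>\<omega>. K * (1 + \<bar>Y \<omega>\<bar>) ^ 3)" unfolding L3_def by simp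
  moreover have "(\<lambda>\<omega>. f (Y \<omega>)) \<in> borel_measurable M"
    using measurable_compose[OF _ F3_borel_measurable[OF assms(2)], of Y M] assms(1)
    unfolding L3_def by simp
  moreover have "AE \<omega> in M. norm (f (Y \<omega>)) \<le> norm (K * (1 + \<bar>Y \<omega>\<bar>) ^ 3)"
    using K by (intro AE_I2) (simp, meson abs_ge_self order_trans)
  ultimately show ?thesis by (rule Bochner_Integration.integrable_bound)
qed

lemma integral_indep_var_iterated:
  fixes F :: "'b \<times> 'b \<Rightarrow> real"
  assumes indep: "indep_var S U T V" and [measurable]: "F \<in> borel_measurable (S \<Otimes>\<^sub>M T)"
    and int: "integrable M (\<lambda>\<omega>. F (U \<omega>, V \<omega>))"
  shows "integrable (distr M T V) (\<lambda>v. \<integral>\<omega>. F (U \<omega>, v) \<partial>M)"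
    and "(\<integral>\<omega>. F (U \<omega>, V \<omega>) \<partial>M) = (\<integral>v. (\<integral>\<omega>. F (U \<omega>, v) \<partial>M) \<partial>distr M T V)"
proof -
  have [measurable]: "U \<in> measurable M S" "V \<in> measurable M T"
    and prod: "distr M S U \<Otimes>\<^sub>M distr M T V = distr M (S \<Otimes>\<^sub>M T) (\<lambda>\<omega>. (U \<omega>, V \<omega>))"
    using indep unfolding indep_var_distribution_eq by auto
  interpret U: prob_space "distr M S U" by (rule prob_space_distr) simp
  interpret V: prob_space "distr M T V" by (rule prob_space_distr) simp
  interpret UV: pair_prob_space "distr M S U" "distr M T V" ..
  have inner: "(\<integral>u. F (u, v) \<partial>distr M S U) = (\<integral>\<omega>. F (U \<omega>, v) \<partial>M)"
    if "v \<in> space (distr M T V)" for v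
  proof -
    from that have [measurable]: "v \<in> space T" by simp
    show ?thesis by (rule integral_distr) measurable
  qed
  have int_prod: "integrable (distr M S U \<Otimes>\<^sub>M distr M T V) F"
    unfolding prod using int by (subst integrable_distr_eq) auto
  have "integrable (distr M T V) (\<lambda>v. \<integral>u. F (u, v) \<partial>distr M S U)"
    using UV.integrable_snd[of "\<lambda>u v. F (u, v)"] int_prod by simp
  moreover have "integrable (distr M T V) (\<lambda>v. \<integral>u. F (u, v) \<partial>distr M S U)
      \<longleftrightarrow> integrable (distr M T V) (\<lambda>v. \<integral>\<omega>. F (U \<omega>, v) \<partial>M)"
    by (intro Bochner_Integration.integrable_cong refl inner)
  ultimately show "integrable (distr M T V) (\<lambda>v. \<integral>\<omega>. F (U \<omega>, v) \<partial>M)" by simp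
  have "(\<integral>\<omega>. F (U \<omega>, V \<omega>) \<partial>M) = integral\<^sup>L (distr M S U \<Otimes>\<^sub>M distr M T V) F"
    unfolding prod by (subst integral_distr) auto
  also have "\<dots> = (\<integral>v. (\<integral>u. F (u, v) \<partial>distr M S U) \<partial>distr M T V)"
    using UV.integral_snd[of "\<lambda>u v. F (u, v)"] int_prod by simp
  also have "\<dots> = (\<integral>v. (\<integral>\<omega>. F (U \<omega>, v) \<partial>M) \<partial>distr M T V)"
    by (rule Bochner_Integration.integral_cong[OF refl inner])
  finally show "(\<integral>\<omega>. F (U \<omega>, V \<omega>) \<partial>M) = (\<integral>v. (\<integral>\<omega>. F (U \<omega>, v) \<partial>M) \<partial>distr M T V)" .
qed

text \<open>Conditioning on \<open>V\<close>; the \<open>L3\<close> hypotheses make every \<open>f \<in> F3\<close> integrable, as Fubini requires.\<close>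
lemma zeta3_le_nn_integral_indep:
  assumes indep: "indep_var S U T V" "indep_var S' U' T V"
    and [measurable]: "G \<in> borel_measurable (S \<Otimes>\<^sub>M T)" "G' \<in> borel_measurable (S' \<Otimes>\<^sub>M T)"
    and L3: "L3 M (\<lambda>\<omega>. G (U \<omega>, V \<omega>))" "L3 M (\<lambda>\<omega>. G' (U' \<omega>, V \<omega>))"
    and [measurable]: "D \<in> borel_measurable T"
    and local: "\<And>v. v \<in> space T \<Longrightarrow>
      zeta3 (distr M borel (\<lambda>\<omega>. G (U \<omega>, v))) (distr M borel (\<lambda>\<omega>. G' (U' \<omega>, v))) \<le> D v"
  shows "zeta3 (distr M borel (\<lambda>\<omega>. G (U \<omega>, V \<omega>))) (distr M borel (\<lambda>\<omega>. G' (U' \<omega>, V \<omega>)))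
           \<le> (\<integral>\<^sup>+\<omega>. D (V \<omega>) \<partial>M)"
proof (rule zeta3_distr_leI)
  have [measurable]: "U \<in> measurable M S" "U' \<in> measurable M S'" "V \<in> measurable M T"
    using indep by (auto dest: indep_var_rv1 indep_var_rv2)
  show "(\<lambda>\<omega>. G (U \<omega>, V \<omega>)) \<in> borel_measurable M" "(\<lambda>\<omega>. G' (U' \<omega>, V \<omega>)) \<in> borel_measurable M"
    by measurable
  fix f assume f: "f \<in> F3"
  note [measurable] = F3_borel_measurable[OF f]
  define g g' where "g v = (\<integral>\<omega>. f (G (U \<omega>, v)) \<partial>M)" and "g' v = (\<integral>\<omega>. f (G' (U' \<omega>, v)) \<partial>M)" for v
  have int: "integrable M (\<lambda>\<omega>. f (G (U \<omega>, V \<omega>)))" "integrable M (\<lambda>\<omega>. f (G' (U' \<omega>, V \<omega>)))"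
    using L3 by (auto intro: integrable_F3_L3 f)
  note it = integral_indep_var_iterated[OF indep(1) _ int(1)] integral_indep_var_iterated[OF indep(2) _ int(2)]
  have "ennreal \<bar>(\<integral>\<omega>. f (G (U \<omega>, V \<omega>)) \<partial>M) - (\<integral>\<omega>. f (G' (U' \<omega>, V \<omega>)) \<partial>M)\<bar>
      = ennreal (norm (\<integral>v. g v - g' v \<partial>distr M T V))"
    using it by (simp add: g_def g'_def)
  also have "\<dots> \<le> (\<integral>\<^sup>+v. norm (g v - g' v) \<partial>distr M T V)"
    by (rule integral_norm_bound_ennreal) (use it in \<open>simp add: g_def g'_def\<close>)
  also have "\<dots> \<le> (\<integral>\<^sup>+v. D v \<partial>distr M T V)"
  proof (rule nn_integral_mono)
    fix v assume "v \<in> space (distr M T V)"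
    then have v[measurable]: "v \<in> space T" by simp
    have "ennreal (norm (g v - g' v))
        \<le> zeta3 (distr M borel (\<lambda>\<omega>. G (U \<omega>, v))) (distr M borel (\<lambda>\<omega>. G' (U' \<omega>, v)))"
      unfolding g_def g'_def real_norm_def by (rule expectation_diff_le_zeta3[OF f]) measurable
    also have "\<dots> \<le> D v" by (rule local[OF v])
    finally show "ennreal (norm (g v - g' v)) \<le> D v" .
  qed
  also have "\<dots> = (\<integral>\<^sup>+\<omega>. D (V \<omega>) \<partial>M)"
    by (rule nn_integral_distr) auto
  finally show "ennreal \<bar>(\<integral>\<omega>. f (G (U \<omega>, V \<omega>)) \<partial>M) - (\<integral>\<omega>. f (G' (U' \<omega>, V \<omega>)) \<partial>M)\<bar>
      \<le> (\<integral>\<^sup>+\<omega>. D (V \<omega>) \<partial>M)" .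
qed

end

lemma distr_cong_compose:
  assumes "distr M borel Y = distr M borel Y'" and [measurable]: "Y \<in> borel_measurable M"
    "Y' \<in> borel_measurable M" "h \<in> borel_measurable borel"
  shows "distr M borel (\<lambda>\<omega>. h (Y \<omega>)) = distr M borel (\<lambda>\<omega>. h (Y' \<omega>))"
proof -
  have "distr M borel (\<lambda>\<omega>. h (Y \<omega>)) = distr (distr M borel Y) borel h"
    by (simp add: distr_distr comp_def)
  also have "\<dots> = distr M borel (\<lambda>\<omega>. h (Y' \<omega>))"
    by (simp add: assms(1) distr_distr comp_def)
  finally show ?thesis .
qed

lemma sqrt_power3: "0 \<le> x \<Longrightarrow> sqrt x ^ 3 = x powr (3 / 2)"
  by (simp add: powr_half_sqrt_powr real_sqrt_power powr_realpow')

lemma gen_sets_compose_subset: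
  assumes "Y \<in> measurable M N" "g \<in> measurable N K"
  shows "{(\<lambda>\<omega>. g (Y \<omega>)) -` A \<inter> space M | A. A \<in> sets K} \<subseteq> gen_sets M Y N"
proof
  fix S assume "S \<in> {(\<lambda>\<omega>. g (Y \<omega>)) -` A \<inter> space M | A. A \<in> sets K}"
  then obtain A where A: "A \<in> sets K" "S = (\<lambda>\<omega>. g (Y \<omega>)) -` A \<inter> space M" by blast
  then have "S = Y -` (g -` A \<inter> space N) \<inter> space M"
    using measurable_space[OF assms(1)] by auto
  moreover have "g -` A \<inter> space N \<in> sets N" using measurable_sets[OF assms(2) A(1)] .
  ultimately show "S \<in> gen_sets M Y N" unfolding gen_sets_def by blast
qed

lemma sum_q_eq_1:
  assumes "2 \<le> m" shows "(\<Sum>i=1..m-1. q m i) = 1"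
proof -
  define H where "H = (harm (m - 1) :: real)"
  have "H > 0" unfolding H_def using assms by (intro harm_pos) simp
  have H1: "(\<Sum>i=1..m-1. 1 / real i) = H"
    unfolding H_def harm_def by (simp add: divide_inverse)
  have "(\<Sum>i=1..m-1. 1 / (real m - real i)) = (\<Sum>i=1..m-1. 1 / (real m - real (m - 1 + 1 - i)))"
    by (rule sum.atLeastAtMost_rev)
  also have "\<dots> = H"
    unfolding H1[symmetric] using assms by (intro sum.cong) (auto simp: of_nat_diff)
  finally have H2: "(\<Sum>i=1..m-1. 1 / (real m - real i)) = H" .
  have "q m i = (1 / real i + 1 / (real m - real i)) / (2 * H)" if "i \<in> {1..m-1}" for i
  proof -
    have "real i > 0" "real m - real i > 0" using that assms by auto
    then show ?thesis using \<open>H > 0\<close> unfolding q_def H_def[symmetric] by (simp add: field_simps)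
  qed
  then have "(\<Sum>i=1..m-1. q m i) = ((\<Sum>i=1..m-1. 1 / real i) + (\<Sum>i=1..m-1. 1 / (real m - real i))) / (2 * H)"
    by (simp add: sum_divide_distrib[symmetric] sum.distrib)
  also have "\<dots> = 1" using \<open>H > 0\<close> unfolding H1 H2 by simp
  finally show ?thesis .
qed

lemma (in prob_space) AE_mem_of_sum_prob_eq_1:
  assumes [measurable]: "L \<in> measurable M (count_space UNIV)" and "finite K"
    and "(\<Sum>i\<in>K. prob {\<omega>\<in>space M. L \<omega> = i}) = 1"
  shows "AE \<omega> in M. L \<omega> \<in> K"
proof -
  have "{\<omega>\<in>space M. L \<omega> \<in> K} = (\<Union>i\<in>K. {\<omega>\<in>space M. L \<omega> = i})" by auto
  also have "prob \<dots> = (\<Sum>i\<in>K. prob {\<omega>\<in>space M. L \<omega> = i})"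
    by (rule finite_measure_finite_Union) (auto simp: \<open>finite K\<close> disjoint_family_on_def)
  finally have "prob {\<omega>\<in>space M. L \<omega> \<in> K} = 1" using assms(3) by simp
  then have "AE \<omega> in M. \<omega> \<in> {\<omega>\<in>space M. L \<omega> \<in> K}"
    by (rule AE_prob_1)
  then show ?thesis by (rule AE_mp) (auto intro!: AE_I2)
qed

text \<open>A common codomain for all the independent components, as required by \<open>indep_var\<close>:
  an index together with a real sequence.\<close>
type_synonym enc = "nat \<times> (nat \<Rightarrow> real)"

definition enc_space :: "enc measure" where
  "enc_space = count_space UNIV \<Otimes>\<^sub>M PiM UNIV (\<lambda>_. borel)"

lemma measurable_enc_index:
  "c \<in> A \<Longrightarrow> (\<lambda>v. fst (v c)) \<in> measurable (PiM A (\<lambda>_. enc_space)) (count_space UNIV)"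
  unfolding enc_space_def by measurable

locale split_recursion = prob_space M for M :: "'a measure" +
  fixes X X' :: "nat \<Rightarrow> 'a \<Rightarrow> real" and I :: "'a \<Rightarrow> nat" and b N1 N2 :: "'a \<Rightarrow> real"
    and \<sigma> :: real and n :: nat
  assumes X_measurable[measurable]: "\<And>j. X j \<in> borel_measurable M"
    and X'_measurable[measurable]: "\<And>j. X' j \<in> borel_measurable M"
    and I_measurable[measurable]: "I \<in> measurable M (count_space UNIV)"
    and b_measurable[measurable]: "b \<in> borel_measurable M"
    and I_range: "AE \<omega> in M. I \<omega> \<in> {1..<n}"
    and X'_distr: "\<And>j. distr M borel (X' j) = distr M borel (X j)"
    and N1: "distributed M lborel N1 std_normal_density"
    and N2: "distributed M lborel N2 std_normal_density"
    and indep: "indep_sets (\<lambda>c. case c of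
            CX \<Rightarrow> gen_sets M (\<lambda>\<omega> j. X j \<omega>) (PiM UNIV (\<lambda>_. borel))
          | CX' \<Rightarrow> gen_sets M (\<lambda>\<omega> j. X' j \<omega>) (PiM UNIV (\<lambda>_. borel))
          | CIb \<Rightarrow> gen_sets M (\<lambda>\<omega>. (I \<omega>, b \<omega>)) (count_space UNIV \<Otimes>\<^sub>M borel)
          | CN1 \<Rightarrow> gen_sets M N1 borel
          | CN2 \<Rightarrow> gen_sets M N2 borel) UNIV"
    and recursion: "distr M borel (X n) = distr M borel (\<lambda>\<omega>. X (I \<omega>) \<omega> + X' (n - I \<omega>) \<omega> + b \<omega>)"
    and \<sigma>_pos: "\<sigma> > 0"
    and X_L3: "\<And>j. 1 \<le> j \<Longrightarrow> L3 M (X j)"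
    and b_L3: "L3 M b"
begin

definition mu :: "nat \<Rightarrow> real" where
  "mu j = mean M (X j)"

definition normalize :: "nat \<Rightarrow> real \<Rightarrow> real" where
  "normalize j x = (x - mu j) / (\<sigma> * sqrt (real j))"

definition Z :: "nat \<Rightarrow> 'a \<Rightarrow> real" where
  "Z j \<omega> = normalize j (X j \<omega>)"

definition Z' :: "nat \<Rightarrow> 'a \<Rightarrow> real" where
  "Z' j \<omega> = normalize j (X' j \<omega>)"

definition tau :: "nat \<Rightarrow> real" where
  "tau j = sqrt (var M (Z j))"

definition d :: "nat \<Rightarrow> ennreal" where
  "d j = zeta3 (distr M borel (Z j)) (distr M borel (\<lambda>\<omega>. tau j * N1 \<omega>))"

text \<open>For \<open>i = I \<omega>\<close> and \<open>\<beta> = b \<omega>\<close>, the last summand is the paper's b^(n).\<close>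
definition combine :: "nat \<Rightarrow> real \<Rightarrow> real \<Rightarrow> real \<Rightarrow> real" where
  "combine i x y \<beta> = sqrt (real i / real n) * x + sqrt (real (n - i) / real n) * y
     + (\<beta> + mu i + mu (n - i) - mu n) / (\<sigma> * sqrt (real n))"

definition Zsplit :: "'a \<Rightarrow> real" where
  "Zsplit \<omega> = combine (I \<omega>) (Z (I \<omega>) \<omega>) (Z' (n - I \<omega>) \<omega>) (b \<omega>)"

definition Zhybrid :: "'a \<Rightarrow> real" where
  "Zhybrid \<omega> = combine (I \<omega>) (tau (I \<omega>) * N1 \<omega>) (Z' (n - I \<omega>) \<omega>) (b \<omega>)"

definition Zstar :: "'a \<Rightarrow> real" where
  "Zstar \<omega> = combine (I \<omega>) (tau (I \<omega>) * N1 \<omega>) (tau (n - I \<omega>) * N2 \<omega>) (b \<omega>)"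

lemma N_measurable[measurable]: "N1 \<in> borel_measurable M" "N2 \<in> borel_measurable M"
  using distributed_measurable[OF N1] distributed_measurable[OF N2] by simp_all

lemma normalize_measurable[measurable]: "normalize j \<in> borel_measurable borel"
  unfolding normalize_def by measurable

lemma Z_measurable[measurable]: "Z j \<in> borel_measurable M" "Z' j \<in> borel_measurable M"
  unfolding Z_def[abs_def] Z'_def[abs_def] normalize_def by measurable

lemma combine_normalize:
  assumes "0 < i" "i < n"
  shows "combine i (normalize i x) (normalize (n - i) y) \<beta> = normalize n (x + y + \<beta>)"
proof -
  have scale: "sqrt (real k / real n) * normalize k z = (z - mu k) / (\<sigma> * sqrt (real n))"
    if "0 < k" for k z
    using that assms \<sigma>_pos by (simp add: normalize_def real_sqrt_divide field_simps)
  have "combine i (normalize i x) (normalize (n - i) y) \<beta> = (x - mu i) / (\<sigma> * sqrt (real n))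
      + (y - mu (n - i)) / (\<sigma> * sqrt (real n)) + (\<beta> + mu i + mu (n - i) - mu n) / (\<sigma> * sqrt (real n))"
    using assms by (simp only: combine_def scale zero_less_diff)
  also have "\<dots> = ((x - mu i) + (y - mu (n - i)) + (\<beta> + mu i + mu (n - i) - mu n)) / (\<sigma> * sqrt (real n))"
    by (simp only: add_divide_distrib)
  also have "\<dots> = normalize n (x + y + \<beta>)"
    unfolding normalize_def by (intro arg_cong[where f="\<lambda>t. t / (\<sigma> * sqrt (real n))"]) simp
  finally show ?thesis .
qed

lemma measurable_at_I:
  "(\<And>i. F i \<in> borel_measurable M) \<Longrightarrow> (\<lambda>\<omega>. F (I \<omega>) \<omega>) \<in> borel_measurable M"
  by (rule measurable_compose_countable'[OF _ I_measurable]) auto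

lemma combine_at_I:
  assumes [measurable]: "\<And>i. x i \<in> borel_measurable M" "\<And>i. y i \<in> borel_measurable M"
  shows "(\<lambda>\<omega>. combine (I \<omega>) (x (I \<omega>) \<omega>) (y (I \<omega>) \<omega>) (b \<omega>)) \<in> borel_measurable M" (is ?meas)
    and "(\<And>i. i \<in> {1..<n} \<Longrightarrow> L3 M (x i)) \<Longrightarrow> (\<And>i. i \<in> {1..<n} \<Longrightarrow> L3 M (y i))
      \<Longrightarrow> L3 M (\<lambda>\<omega>. combine (I \<omega>) (x (I \<omega>) \<omega>) (y (I \<omega>) \<omega>) (b \<omega>))"
proof -
  have meas: "(\<lambda>\<omega>. combine i (x i \<omega>) (y i \<omega>) (b \<omega>)) \<in> borel_measurable M" for i
    unfolding combine_def by measurable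
  show ?meas by (rule measurable_at_I[OF meas])
  assume L3_xy: "\<And>i. i \<in> {1..<n} \<Longrightarrow> L3 M (x i)" "\<And>i. i \<in> {1..<n} \<Longrightarrow> L3 M (y i)"
  have L3_i: "L3 M (\<lambda>\<omega>. combine i (x i \<omega>) (y i \<omega>) (b \<omega>))" if "i \<in> {1..<n}" for i
    unfolding combine_def
    by (intro L3_add L3_cmult L3_divide L3_diff L3_const b_L3 L3_xy[OF that])
  show "L3 M (\<lambda>\<omega>. combine (I \<omega>) (x (I \<omega>) \<omega>) (y (I \<omega>) \<omega>) (b \<omega>))"
    by (rule L3_random_index[OF I_measurable finite_atLeastLessThan I_range meas L3_i])
qed

lemma L3_Z:
  assumes "1 \<le> j" shows "L3 M (Z j)" and "L3 M (Z' j)"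
proof -
  have "L3 M (X' j)" using L3_distr_eq[OF X'_distr X'_measurable X_L3[OF assms]] .
  then show "L3 M (Z j)" "L3 M (Z' j)"
    unfolding Z_def[abs_def] Z'_def[abs_def] normalize_def
    by (intro L3_divide L3_diff L3_const X_L3 assms)+
qed

lemma L3_tau_N: "L3 M (\<lambda>\<omega>. c * N1 \<omega>)" "L3 M (\<lambda>\<omega>. c * N2 \<omega>)"
  by (intro L3_cmult L3_std_normal N1 N2)+

lemma Zsplit_Zhybrid_Zstar_measurable[measurable]:
  "Zsplit \<in> borel_measurable M" "Zhybrid \<in> borel_measurable M" "Zstar \<in> borel_measurable M"
  using combine_at_I(1)[of Z "\<lambda>i. Z' (n - i)"] combine_at_I(1)[of "\<lambda>i \<omega>. tau i * N1 \<omega>" "\<lambda>i. Z' (n - i)"]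
    combine_at_I(1)[of "\<lambda>i \<omega>. tau i * N1 \<omega>" "\<lambda>i \<omega>. tau (n - i) * N2 \<omega>"]
  unfolding Zsplit_def[abs_def] Zhybrid_def[abs_def] Zstar_def[abs_def] by simp_all

lemma L3_Zsplit_Zhybrid_Zstar: "L3 M Zsplit" "L3 M Zhybrid" "L3 M Zstar"
proof -
  have "L3 M (Z i)" "L3 M (Z' (n - i))" if "i \<in> {1..<n}" for i
    using that by (auto intro: L3_Z)
  then show "L3 M Zsplit" "L3 M Zhybrid" "L3 M Zstar"
    using combine_at_I(2)[of Z "\<lambda>i. Z' (n - i)"] combine_at_I(2)[of "\<lambda>i \<omega>. tau i * N1 \<omega>" "\<lambda>i. Z' (n - i)"]
      combine_at_I(2)[of "\<lambda>i \<omega>. tau i * N1 \<omega>" "\<lambda>i \<omega>. tau (n - i) * N2 \<omega>"]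
    unfolding Zsplit_def[abs_def] Zhybrid_def[abs_def] Zstar_def[abs_def] by (simp_all add: L3_tau_N)
qed

lemma distr_Z_eq_Zsplit: "distr M borel (Z n) = distr M borel Zsplit"
proof -
  have [measurable]: "(\<lambda>\<omega>. X (I \<omega>) \<omega> + X' (n - I \<omega>) \<omega> + b \<omega>) \<in> borel_measurable M"
    by (rule measurable_at_I[where F="\<lambda>i \<omega>. X i \<omega> + X' (n - i) \<omega> + b \<omega>"]) measurable
  have "distr M borel (Z n) = distr M borel (\<lambda>\<omega>. normalize n (X (I \<omega>) \<omega> + X' (n - I \<omega>) \<omega> + b \<omega>))"
    unfolding Z_def[abs_def] by (rule distr_cong_compose[OF recursion]) measurable
  also have "\<dots> = distr M borel Zsplit"
  proof (rule distr_cong_AE)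
    show "AE \<omega> in M. normalize n (X (I \<omega>) \<omega> + X' (n - I \<omega>) \<omega> + b \<omega>) = Zsplit \<omega>"
      using I_range by eventually_elim (simp add: Zsplit_def Z_def Z'_def combine_normalize)
  qed simp_all
  finally show ?thesis .
qed

lemma distr_Z'_eq_Z: "distr M borel (Z' j) = distr M borel (Z j)"
  unfolding Z_def[abs_def] Z'_def[abs_def] by (rule distr_cong_compose[OF X'_distr]) auto

lemma distr_N2_eq_N1: "distr M borel (\<lambda>\<omega>. c * N2 \<omega>) = distr M borel (\<lambda>\<omega>. c * N1 \<omega>)"
proof (rule distr_cong_compose[where h="\<lambda>x. c * x"])
  have "distr M borel N1 = distr M lborel N1" "distr M borel N2 = distr M lborel N2"
    by (auto intro: distr_cong)
  then show "distr M borel N2 = distr M borel N1"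
    using distributed_distr_eq_density[OF N1] distributed_distr_eq_density[OF N2] by simp
qed auto

lemma zeta3_combine_fst:
  assumes "Y \<in> borel_measurable M" "Y' \<in> borel_measurable M"
  shows "zeta3 (distr M borel (\<lambda>\<omega>. combine i (Y \<omega>) y \<beta>)) (distr M borel (\<lambda>\<omega>. combine i (Y' \<omega>) y \<beta>))
    \<le> ennreal ((real i / real n) powr (3 / 2)) * zeta3 (distr M borel Y) (distr M borel Y')"
proof -
  define c where "c = combine i 0 y \<beta>"
  have "combine i x y \<beta> = sqrt (real i / real n) * x + c" for x
    by (simp add: combine_def c_def)
  then show ?thesis
    using zeta3_affine_le[of "sqrt (real i / real n)" Y M Y' c] assms by (simp add: sqrt_power3)
qed

lemma zeta3_combine_snd:
  assumes "Y \<in> borel_measurable M" "Y' \<in> borel_measurable M"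
  shows "zeta3 (distr M borel (\<lambda>\<omega>. combine i x (Y \<omega>) \<beta>)) (distr M borel (\<lambda>\<omega>. combine i x (Y' \<omega>) \<beta>))
    \<le> ennreal ((real (n - i) / real n) powr (3 / 2)) * zeta3 (distr M borel Y) (distr M borel Y')"
proof -
  define c where "c = combine i x 0 \<beta>"
  have "combine i x y \<beta> = sqrt (real (n - i) / real n) * y + c" for y
    by (simp add: combine_def c_def)
  then show ?thesis
    using zeta3_affine_le[of "sqrt (real (n - i) / real n)" Y M Y' c] assms by (simp add: sqrt_power3)
qed

definition comp_var :: "comp \<Rightarrow> 'a \<Rightarrow> enc" where
  "comp_var c \<omega> = (case c of
      CX \<Rightarrow> (0, \<lambda>j. X j \<omega>) | CX' \<Rightarrow> (0, \<lambda>j. X' j \<omega>) | CIb \<Rightarrow> (I \<omega>, \<lambda>_. b \<omega>)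
    | CN1 \<Rightarrow> (0, \<lambda>_. N1 \<omega>) | CN2 \<Rightarrow> (0, \<lambda>_. N2 \<omega>))"

lemma indep_comp_var: "indep_vars (\<lambda>_. enc_space) comp_var UNIV"
proof -
  have seq[measurable]: "(\<lambda>\<omega> j. X j \<omega>) \<in> measurable M (PiM UNIV (\<lambda>_. borel))"
    "(\<lambda>\<omega> j. X' j \<omega>) \<in> measurable M (PiM UNIV (\<lambda>_. borel))"
    by (auto intro!: measurable_restrict[where I=UNIV, unfolded restrict_UNIV])
  have enc: "(\<lambda>x. (0::nat, x)) \<in> measurable (PiM UNIV (\<lambda>_. borel)) enc_space"
    "(\<lambda>p. (fst p, \<lambda>_::nat. snd p)) \<in> measurable (count_space UNIV \<Otimes>\<^sub>M borel) enc_space"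
    "(\<lambda>r. (0::nat, \<lambda>_::nat. r)) \<in> measurable borel enc_space"
    unfolding enc_space_def
    by (auto intro!: measurable_Pair measurable_restrict[where I=UNIV, unfolded restrict_UNIV])
  have Ib: "(\<lambda>\<omega>. (I \<omega>, b \<omega>)) \<in> measurable M (count_space UNIV \<Otimes>\<^sub>M borel)" by measurable
  show ?thesis
    unfolding indep_vars_def2
  proof
    show "\<forall>c\<in>UNIV. random_variable enc_space (comp_var c)"
    proof
      fix c :: comp
      show "random_variable enc_space (comp_var c)"
      using measurable_compose[OF seq(1) enc(1)] measurable_compose[OF seq(2) enc(1)]
        measurable_compose[OF Ib enc(2)] measurable_compose[OF N_measurable(1) enc(3)]
        measurable_compose[OF N_measurable(2) enc(3)]
      by (cases c) (simp_all add: comp_var_def[abs_def])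
    qed
    show "indep_sets (\<lambda>c. {comp_var c -` A \<inter> space M |A. A \<in> sets enc_space}) UNIV"
    proof (rule indep_sets_mono_sets[OF indep])
      fix c :: comp
      show "{comp_var c -` A \<inter> space M |A. A \<in> sets enc_space} \<subseteq> (case c of
            CX \<Rightarrow> gen_sets M (\<lambda>\<omega> j. X j \<omega>) (PiM UNIV (\<lambda>_. borel))
          | CX' \<Rightarrow> gen_sets M (\<lambda>\<omega> j. X' j \<omega>) (PiM UNIV (\<lambda>_. borel))
          | CIb \<Rightarrow> gen_sets M (\<lambda>\<omega>. (I \<omega>, b \<omega>)) (count_space UNIV \<Otimes>\<^sub>M borel)
          | CN1 \<Rightarrow> gen_sets M N1 borel
          | CN2 \<Rightarrow> gen_sets M N2 borel)"
        using gen_sets_compose_subset[OF seq(1) enc(1)] gen_sets_compose_subset[OF seq(2) enc(1)]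
          gen_sets_compose_subset[OF Ib enc(2)] gen_sets_compose_subset[OF N_measurable(1) enc(3)]
          gen_sets_compose_subset[OF N_measurable(2) enc(3)]
        by (cases c) (simp_all add: comp_var_def[abs_def])
    qed
  qed
qed

lemma zeta3_Zsplit_Zhybrid:
  "zeta3 (distr M borel Zsplit) (distr M borel Zhybrid)
     \<le> (\<integral>\<^sup>+\<omega>. ennreal ((real (I \<omega>) / real n) powr (3 / 2)) * d (I \<omega>) \<partial>M)"
proof -
  define U U' V where "U \<omega> = (\<lambda>c\<in>{CX}. comp_var c \<omega>)" and "U' \<omega> = (\<lambda>c\<in>{CN1}. comp_var c \<omega>)"
    and "V \<omega> = (\<lambda>c\<in>{CX', CIb}. comp_var c \<omega>)" for \<omega>
  define H H' where
    "H i p = combine i (normalize i (snd (fst p CX) i)) (normalize (n - i) (snd (snd p CX') (n - i)))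
       (snd (snd p CIb) 0)"
    and "H' i p = combine i (tau i * snd (fst p CN1) 0) (normalize (n - i) (snd (snd p CX') (n - i)))
       (snd (snd p CIb) 0)" for i and p :: "(comp \<Rightarrow> enc) \<times> (comp \<Rightarrow> enc)"
  define D where "D v = ennreal ((real (fst (v CIb)) / real n) powr (3 / 2)) * d (fst (v CIb))"
    for v :: "comp \<Rightarrow> enc"
  have "zeta3 (distr M borel (\<lambda>\<omega>. H (fst (snd (U \<omega>, V \<omega>) CIb)) (U \<omega>, V \<omega>)))
      (distr M borel (\<lambda>\<omega>. H' (fst (snd (U' \<omega>, V \<omega>) CIb)) (U' \<omega>, V \<omega>))) \<le> (\<integral>\<^sup>+\<omega>. D (V \<omega>) \<partial>M)"
  proof (rule zeta3_le_nn_integral_indep[where G="\<lambda>p. H (fst (snd p CIb)) p" and G'="\<lambda>p. H' (fst (snd p CIb)) p"])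
    show "indep_var (PiM {CX} (\<lambda>_. enc_space)) U (PiM {CX', CIb} (\<lambda>_. enc_space)) V"
      "indep_var (PiM {CN1} (\<lambda>_. enc_space)) U' (PiM {CX', CIb} (\<lambda>_. enc_space)) V"
      unfolding U_def U'_def V_def by (auto intro!: indep_var_restrict[OF indep_comp_var])
    show "(\<lambda>p. H (fst (snd p CIb)) p) \<in> borel_measurable (PiM {CX} (\<lambda>_. enc_space) \<Otimes>\<^sub>M PiM {CX', CIb} (\<lambda>_. enc_space))"
      "(\<lambda>p. H' (fst (snd p CIb)) p) \<in> borel_measurable (PiM {CN1} (\<lambda>_. enc_space) \<Otimes>\<^sub>M PiM {CX', CIb} (\<lambda>_. enc_space))"
      by (rule measurable_compose_countable'[OF _ measurable_compose[OF measurable_snd measurable_enc_index]],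
          simp_all add: H_def H'_def combine_def enc_space_def, measurable)+
    show "D \<in> borel_measurable (PiM {CX', CIb} (\<lambda>_. enc_space))"
      unfolding D_def[abs_def]
      by (rule measurable_compose[OF measurable_enc_index borel_measurable_count_space]) simp
    show "L3 M (\<lambda>\<omega>. H (fst (snd (U \<omega>, V \<omega>) CIb)) (U \<omega>, V \<omega>))"
      "L3 M (\<lambda>\<omega>. H' (fst (snd (U' \<omega>, V \<omega>) CIb)) (U' \<omega>, V \<omega>))"
      using L3_Zsplit_Zhybrid_Zstar
      by (simp_all add: H_def H'_def U_def U'_def V_def comp_var_def Zsplit_def[abs_def] Zhybrid_def[abs_def] Z_def Z'_def)
    fix v assume "v \<in> space (PiM {CX', CIb} (\<lambda>_. enc_space))"
    show "zeta3 (distr M borel (\<lambda>\<omega>. H (fst (snd (U \<omega>, v) CIb)) (U \<omega>, v)))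
        (distr M borel (\<lambda>\<omega>. H' (fst (snd (U' \<omega>, v) CIb)) (U' \<omega>, v))) \<le> D v"
      using zeta3_combine_fst[of "Z (fst (v CIb))" "\<lambda>\<omega>. tau (fst (v CIb)) * N1 \<omega>"]
      by (simp add: H_def H'_def U_def U'_def comp_var_def Z_def[symmetric] D_def d_def)
  qed
  then show ?thesis
    by (simp add: H_def H'_def U_def U'_def V_def comp_var_def D_def Zsplit_def[abs_def] Zhybrid_def[abs_def] Z_def Z'_def)
qed

lemma zeta3_Zhybrid_Zstar:
  "zeta3 (distr M borel Zhybrid) (distr M borel Zstar)
     \<le> (\<integral>\<^sup>+\<omega>. ennreal ((real (n - I \<omega>) / real n) powr (3 / 2)) * d (n - I \<omega>) \<partial>M)"
proof -
  define U U' V where "U \<omega> = (\<lambda>c\<in>{CX'}. comp_var c \<omega>)" and "U' \<omega> = (\<lambda>c\<in>{CN2}. comp_var c \<omega>)"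
    and "V \<omega> = (\<lambda>c\<in>{CN1, CIb}. comp_var c \<omega>)" for \<omega>
  define H H' where
    "H i p = combine i (tau i * snd (snd p CN1) 0) (normalize (n - i) (snd (fst p CX') (n - i)))
       (snd (snd p CIb) 0)"
    and "H' i p = combine i (tau i * snd (snd p CN1) 0) (tau (n - i) * snd (fst p CN2) 0)
       (snd (snd p CIb) 0)" for i and p :: "(comp \<Rightarrow> enc) \<times> (comp \<Rightarrow> enc)"
  define D where "D v = ennreal ((real (n - fst (v CIb)) / real n) powr (3 / 2)) * d (n - fst (v CIb))"
    for v :: "comp \<Rightarrow> enc"
  have "zeta3 (distr M borel (\<lambda>\<omega>. H (fst (snd (U \<omega>, V \<omega>) CIb)) (U \<omega>, V \<omega>)))
      (distr M borel (\<lambda>\<omega>. H' (fst (snd (U' \<omega>, V \<omega>) CIb)) (U' \<omega>, V \<omega>))) \<le> (\<integral>\<^sup>+\<omega>. D (V \<omega>) \<partial>M)"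
  proof (rule zeta3_le_nn_integral_indep[where G="\<lambda>p. H (fst (snd p CIb)) p" and G'="\<lambda>p. H' (fst (snd p CIb)) p"])
    show "indep_var (PiM {CX'} (\<lambda>_. enc_space)) U (PiM {CN1, CIb} (\<lambda>_. enc_space)) V"
      "indep_var (PiM {CN2} (\<lambda>_. enc_space)) U' (PiM {CN1, CIb} (\<lambda>_. enc_space)) V"
      unfolding U_def U'_def V_def by (auto intro!: indep_var_restrict[OF indep_comp_var])
    show "(\<lambda>p. H (fst (snd p CIb)) p) \<in> borel_measurable (PiM {CX'} (\<lambda>_. enc_space) \<Otimes>\<^sub>M PiM {CN1, CIb} (\<lambda>_. enc_space))"
      "(\<lambda>p. H' (fst (snd p CIb)) p) \<in> borel_measurable (PiM {CN2} (\<lambda>_. enc_space) \<Otimes>\<^sub>M PiM {CN1, CIb} (\<lambda>_. enc_space))"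
      by (rule measurable_compose_countable'[OF _ measurable_compose[OF measurable_snd measurable_enc_index]],
          simp_all add: H_def H'_def combine_def enc_space_def, measurable)+
    show "D \<in> borel_measurable (PiM {CN1, CIb} (\<lambda>_. enc_space))"
      unfolding D_def[abs_def]
      by (rule measurable_compose[OF measurable_enc_index borel_measurable_count_space]) simp
    show "L3 M (\<lambda>\<omega>. H (fst (snd (U \<omega>, V \<omega>) CIb)) (U \<omega>, V \<omega>))"
      "L3 M (\<lambda>\<omega>. H' (fst (snd (U' \<omega>, V \<omega>) CIb)) (U' \<omega>, V \<omega>))"
      using L3_Zsplit_Zhybrid_Zstar
      by (simp_all add: H_def H'_def U_def U'_def V_def comp_var_def Zhybrid_def[abs_def] Zstar_def[abs_def] Z'_def)
    fix v assume "v \<in> space (PiM {CN1, CIb} (\<lambda>_. enc_space))"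
    show "zeta3 (distr M borel (\<lambda>\<omega>. H (fst (snd (U \<omega>, v) CIb)) (U \<omega>, v)))
        (distr M borel (\<lambda>\<omega>. H' (fst (snd (U' \<omega>, v) CIb)) (U' \<omega>, v))) \<le> D v"
      using zeta3_combine_snd[of "Z' (n - fst (v CIb))" "\<lambda>\<omega>. tau (n - fst (v CIb)) * N2 \<omega>"]
      by (simp add: H_def H'_def U_def U'_def comp_var_def Z'_def[symmetric] D_def d_def
          distr_Z'_eq_Z distr_N2_eq_N1)
  qed
  then show ?thesis
    by (simp add: H_def H'_def U_def U'_def V_def comp_var_def D_def Zhybrid_def[abs_def] Zstar_def[abs_def] Z'_def)
qed

theorem d_le_recursive_bound:
  "d n \<le> (\<integral>\<^sup>+\<omega>. ennreal ((real (n - I \<omega>) / real n) powr (3 / 2)) * d (n - I \<omega>)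
                + ennreal ((real (I \<omega>) / real n) powr (3 / 2)) * d (I \<omega>) \<partial>M)
         + zeta3 (distr M borel Zstar) (distr M borel (\<lambda>\<omega>. tau n * N1 \<omega>))"
    (is "_ \<le> (\<integral>\<^sup>+\<omega>. ?snd \<omega> + ?fst \<omega> \<partial>M) + ?last")
proof -
  let ?law = "\<lambda>Y. distr M borel Y" and ?G = "distr M borel (\<lambda>\<omega>. tau n * N1 \<omega>)"
  have "d n = zeta3 (?law Zsplit) ?G"
    by (simp add: d_def distr_Z_eq_Zsplit)
  also have "\<dots> \<le> zeta3 (?law Zsplit) (?law Zhybrid) + (zeta3 (?law Zhybrid) (?law Zstar) + ?last)"
    using zeta3_triangle[of "?law Zsplit" ?G] zeta3_triangle[of "?law Zhybrid" ?G]
    by (meson add_left_mono order_trans)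
  also have "\<dots> \<le> (\<integral>\<^sup>+\<omega>. ?fst \<omega> \<partial>M) + ((\<integral>\<^sup>+\<omega>. ?snd \<omega> \<partial>M) + ?last)"
    by (intro add_mono zeta3_Zsplit_Zhybrid zeta3_Zhybrid_Zstar order_refl)
  also have "\<dots> = (\<integral>\<^sup>+\<omega>. ?snd \<omega> + ?fst \<omega> \<partial>M) + ?last"
  proof -
    have "?fst \<in> borel_measurable M" "?snd \<in> borel_measurable M"
      using measurable_compose[OF I_measurable borel_measurable_count_space] by auto
    then show ?thesis by (simp add: nn_integral_add add_ac)
  qed
  finally show ?thesis .
qed

end

theorem lemma3p1:
  fixes M :: "'a measure"
    and X X' b :: "nat \<Rightarrow> 'a \<Rightarrow> real"
    and L I :: "nat \<Rightarrow> 'a \<Rightarrow> nat"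
    and N1 N2 :: "'a \<Rightarrow> real"
    and \<mu> \<sigma> \<epsilon> C :: real
    and n :: nat
    and Z :: "nat \<Rightarrow> 'a \<Rightarrow> real" and \<tau> mu :: "nat \<Rightarrow> real"
    and bb Zs :: "nat \<Rightarrow> 'a \<Rightarrow> real" and d :: "nat \<Rightarrow> ennreal"
  assumes M: "prob_space M"
    and measX: "\<forall>j. X j \<in> borel_measurable M"
    and measX': "\<forall>j. X' j \<in> borel_measurable M"
    and measb: "\<forall>m. b m \<in> borel_measurable M"
    and measL: "\<forall>m. L m \<in> measurable M (count_space UNIV)"
    and L_dist: "\<forall>m\<ge>2. \<forall>i\<in>{1..m-1}. measure M {\<omega>\<in>space M. L m \<omega> = i} = q m i"
    and I_L: "\<forall>m\<ge>2. \<forall>\<omega>\<in>space M. I m \<omega> = max (L m \<omega>) (m - L m \<omega>)"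
    and X'_dist: "\<forall>j. distr M borel (X' j) = distr M borel (X j)"
    and N1: "distributed M lborel N1 std_normal_density"
    and N2: "distributed M lborel N2 std_normal_density"
    and indep: "\<forall>m\<ge>2. prob_space.indep_sets M
        (\<lambda>c. case c of
            CX \<Rightarrow> gen_sets M (\<lambda>\<omega> j. X j \<omega>) (PiM UNIV (\<lambda>_. borel))
          | CX' \<Rightarrow> gen_sets M (\<lambda>\<omega> j. X' j \<omega>) (PiM UNIV (\<lambda>_. borel))
          | CIb \<Rightarrow> gen_sets M (\<lambda>\<omega>. (I m \<omega>, b m \<omega>)) (count_space UNIV \<Otimes>\<^sub>M borel)
          | CN1 \<Rightarrow> gen_sets M N1 borel
          | CN2 \<Rightarrow> gen_sets M N2 borel) UNIV"
    and recur: "\<forall>m\<ge>2. distr M borel (X m) =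
        distr M borel (\<lambda>\<omega>. X (I m \<omega>) \<omega> + X' (m - I m \<omega>) \<omega> + b m \<omega>)"
    and pos: "\<mu> > 0" "\<sigma> > 0" "\<epsilon> > 0" "C > 0"
    and X3: "\<forall>j\<ge>1. integrable M (\<lambda>\<omega>. \<bar>X j \<omega>\<bar> ^ 3)"
    and b3: "\<forall>m\<ge>2. integrable M (\<lambda>\<omega>. \<bar>b m \<omega>\<bar> ^ 3)"
    and mean_X: "\<forall>m\<ge>1. \<bar>mean M (X m) - \<mu> * real m\<bar> \<le> C * real m powr (1/2 - \<epsilon>)"
    and var_X: "\<forall>m\<ge>1. \<bar>var M (X m) - \<sigma>\<^sup>2 * real m\<bar> \<le> C * real m powr (1 - \<epsilon>)"
    and mom_b: "\<forall>m\<ge>2. mean M (\<lambda>\<omega>. \<bar>b m \<omega>\<bar> ^ 3) \<le> real m powr (3/2 - \<epsilon>)"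
    and n: "2 \<le> n"
    and Z_def: "Z = (\<lambda>j \<omega>. (X j \<omega> - mean M (X j)) / (\<sigma> * sqrt (real j)))"
    and tau_def: "\<tau> = (\<lambda>j. sqrt (var M (Z j)))"
    and mu_def: "mu = (\<lambda>j. mean M (X j))"
    and bb_def: "bb = (\<lambda>m \<omega>. (b m \<omega> + mu (I m \<omega>) + mu (m - I m \<omega>) - mu m) / (\<sigma> * sqrt (real m)))"
    and Zs_def: "Zs = (\<lambda>m \<omega>. sqrt (real (I m \<omega>) / real m) * \<tau> (I m \<omega>) * N1 \<omega>
                   + sqrt (real (m - I m \<omega>) / real m) * \<tau> (m - I m \<omega>) * N2 \<omega> + bb m \<omega>)"
    and d_def: "d = (\<lambda>j. zeta3 (distr M borel (Z j)) (distr M borel (\<lambda>\<omega>. \<tau> j * N1 \<omega>)))"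
  shows "d n \<le> (\<integral>\<^sup>+\<omega>. ennreal ((real (n - I n \<omega>) / real n) powr (3/2)) * d (n - I n \<omega>)
                      + ennreal ((real (I n \<omega>) / real n) powr (3/2)) * d (I n \<omega>) \<partial>M)
             + zeta3 (distr M borel (Zs n)) (distr M borel (\<lambda>\<omega>. \<tau> n * N1 \<omega>))"
proof -
  interpret prob_space M by (rule M)
  have I_measurable: "I n \<in> measurable M (count_space UNIV)"
    using measurable_compose[OF measL[rule_format, of n], of "\<lambda>i. max i (n - i)"] I_L n
    by (simp cong: measurable_cong)
  have "(\<Sum>i\<in>{1..n-1}. prob {\<omega>\<in>space M. L n \<omega> = i}) = (\<Sum>i=1..n-1. q n i)"
    using L_dist n by (intro sum.cong) auto
  then have "AE \<omega> in M. L n \<omega> \<in> {1..n-1}"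
    by (intro AE_mem_of_sum_prob_eq_1[OF measL[rule_format, of n]]) (use sum_q_eq_1[OF n] in simp_all)
  then have I_range: "AE \<omega> in M. I n \<omega> \<in> {1..<n}"
    using AE_space by eventually_elim (use I_L n in \<open>auto simp: max_def\<close>)
  interpret R: split_recursion M X X' "I n" "b n" N1 N2 \<sigma> n
    by unfold_locales
      (use measX measX' measb I_measurable I_range X'_dist N1 N2 indep recur pos X3 b3 n in
        \<open>auto simp: L3_def\<close>)
  have Z: "Z = R.Z"
    by (simp add: fun_eq_iff Z_def R.Z_def R.normalize_def R.mu_def)
  have tau: "\<tau> = R.tau"
    by (simp add: fun_eq_iff tau_def R.tau_def Z)
  have "d = R.d"
    by (simp add: fun_eq_iff d_def R.d_def Z tau)
  moreover have "Zs n = R.Zstar"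
    by (simp add: fun_eq_iff Zs_def bb_def mu_def R.Zstar_def R.combine_def R.mu_def tau)
  ultimately show ?thesis using R.d_le_recursive_bound by (simp add: tau)
qed

end
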